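(* Let $\bm{\Pi}=\{\Pi_{\bm{x}}\}_{\bm{x}\in\{0,1\}^n}$ be a POVM on $(\mathbb{C}^2)^{\otimes n}$. Let $|\Phi_0\rangle=|+\rangle^{\otimes n}$ with $|+\rangle=(|0\rangle+|1\rangle)/\sqrt2$, $W=\frac{1}{2^n}\mathbb{1}-|\Phi_0\rangle\langle\Phi_0|$, and $\mathscr{Q}^{\theta=0}_\Phi(\bm{\Pi})=\frac{1}{2^n}\sum_{\bm{x}}2^n|\operatorname{tr}[W\Pi_{\bm{x}}]|$. Let $\mathcal{C}_{\ell_\infty}(\bm{\Pi})=\sum_{\bm{x}}\sum_{\bm{y}<\bm{z}}|\Pi_{\bm{x}}(\bm{y},\bm{z})|$. Then $$\mathcal{C}_{\ell_\infty}(\bm{\Pi})\ge 2^{n-1}\,\mathscr{Q}^{\theta=0}_\Phi(\bm{\Pi}).$$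
   Context: $\Pi(\bm{y},\bm{z})=\langle\bm{y}|\Pi|\bm{z}\rangle$ in the computational basis $\{|\bm{y}\rangle:\bm{y}\in\{0,1\}^n\}$; the sum over $\bm{y}<\bm{z}$ runs over pairs of distinct bit strings with respect to a fixed total order (each unordered pair once). *)

theory Defs
  imports "HOL-Analysis.Analysis"
begin

text \<open>Operators on (C^2)^{\<otimes> n} are represented as functions nat \<Rightarrow> nat \<Rightarrow> complex
  restricted to indices below 2^n; index i < 2^n encodes the bit string given by the
  binary expansion of i (computational basis). The total order on bit strings is the
  order on these indices.\<close>

definition psd :: "nat \<Rightarrow> (nat \<Rightarrow> nat \<Rightarrow> complex) \<Rightarrow> bool" where
  "psd N A \<longleftrightarrow> (\<forall>v :: nat \<Rightarrow> complex.
      let q = (\<Sum>i<N. \<Sum>j<N. cnj (v i) * A i j * v j) in Im q = 0 \<and> Re q \<ge> 0)"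

definition is_POVM :: "nat \<Rightarrow> (nat \<Rightarrow> nat \<Rightarrow> nat \<Rightarrow> complex) \<Rightarrow> bool" where
  "is_POVM n P \<longleftrightarrow> (\<forall>x<2^n. psd (2^n) (P x)) \<and>
     (\<forall>i<2^n. \<forall>j<2^n. (\<Sum>x<2^n. P x i j) = (if i = j then 1 else 0))"

definition Phi0 :: "nat \<Rightarrow> nat \<Rightarrow> complex" where
  "Phi0 n i = complex_of_real (1 / sqrt (2 ^ n))"

definition W_op :: "nat \<Rightarrow> nat \<Rightarrow> nat \<Rightarrow> complex" where
  "W_op n i j = (if i = j then 1 / 2 ^ n else 0) - Phi0 n i * cnj (Phi0 n j)"

definition mtrace_prod :: "nat \<Rightarrow> (nat \<Rightarrow> nat \<Rightarrow> complex) \<Rightarrow> (nat \<Rightarrow> nat \<Rightarrow> complex) \<Rightarrow> complex" where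
  "mtrace_prod N A B = (\<Sum>i<N. \<Sum>k<N. A i k * B k i)"

definition Q_theta0 :: "nat \<Rightarrow> (nat \<Rightarrow> nat \<Rightarrow> nat \<Rightarrow> complex) \<Rightarrow> real" where
  "Q_theta0 n P = (1 / 2 ^ n) * (\<Sum>x<2^n. 2 ^ n * cmod (mtrace_prod (2^n) (W_op n) (P x)))"

definition C_linf :: "nat \<Rightarrow> (nat \<Rightarrow> nat \<Rightarrow> nat \<Rightarrow> complex) \<Rightarrow> real" where
  "C_linf n P = (\<Sum>x<2^n. \<Sum>z<2^n. \<Sum>y<z. cmod (P x y z))"

end

theory Submission
  imports Defs
begin

text \<open>Since W has entries (delta(y,z) - 1) / 2^n, the diagonal cancels in tr[W Pi] and only
  -2^-n * sum_{y<z} (Pi(y,z) + Pi(z,y)) remains. A positive operator is Hermitian, so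
  |Pi(y,z) + Pi(z,y)| \<le> 2 |Pi(y,z)|; summing over the outcomes gives the bound.\<close>

definition hermitian :: "nat \<Rightarrow> (nat \<Rightarrow> nat \<Rightarrow> complex) \<Rightarrow> bool" where
  "hermitian N A \<longleftrightarrow> (\<forall>i<N. \<forall>j<N. A j i = cnj (A i j))"

lemma sum_mult_delta:
  fixes f :: "nat \<Rightarrow> 'a::semiring_0"
  assumes "y < N"
  shows "(\<Sum>j<N. f j * (if j = y then a else 0)) = f y * a"
proof -
  have "(\<Sum>j<N. f j * (if j = y then a else 0)) = (\<Sum>j<N. if j = y then f y * a else 0)"
    by (rule sum.cong) auto
  then show ?thesis using assms by simp
qed

lemma sum_delta_mult:
  fixes f :: "nat \<Rightarrow> 'a::semiring_0"
  assumes "y < N"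
  shows "(\<Sum>i<N. (if i = y then a else 0) * f i) = a * f y"
proof -
  have "(\<Sum>i<N. (if i = y then a else 0) * f i) = (\<Sum>i<N. if i = y then a * f y else 0)"
    by (rule sum.cong) auto
  then show ?thesis using assms by simp
qed

lemma quadratic_form_one_point:
  fixes A :: "nat \<Rightarrow> nat \<Rightarrow> complex"
  assumes "y < N"
  shows "(\<Sum>i<N. \<Sum>j<N. cnj (if i = y then a else 0) * A i j * (if j = y then a else 0))
       = cnj a * A y y * a"
proof -
  have "(\<Sum>j<N. cnj (if i = y then a else 0) * A i j * (if j = y then a else 0))
      = cnj (if i = y then a else 0) * A i y * a" for i
    using sum_mult_delta[OF assms] .
  then show ?thesis
    using assms by (simp add: if_distrib[of cnj] sum_delta_mult mult.assoc cong: if_cong)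
qed

lemma quadratic_form_two_point:
  fixes A :: "nat \<Rightarrow> nat \<Rightarrow> complex"
  assumes "y \<noteq> z" "y < N" "z < N"
  shows "(\<Sum>i<N. \<Sum>j<N. cnj ((if i = y then a else 0) + (if i = z then b else 0)) * A i j
            * ((if j = y then a else 0) + (if j = z then b else 0)))
       = cnj a * A y y * a + cnj a * A y z * b + cnj b * A z y * a + cnj b * A z z * b"
proof -
  define v where "v i = (if i = y then a else 0) + (if i = z then b else 0)" for i
  have "(\<Sum>j<N. cnj (v i) * A i j * v j) = cnj (v i) * A i y * a + cnj (v i) * A i z * b" for i
    unfolding v_def[of "_ :: nat"] using assms by (simp add: distrib_left sum.distrib sum_mult_delta)
  then show ?thesis
    using assms
    by (simp add: v_def if_distrib[of cnj] distrib_right sum.distrib sum_delta_mult mult.assoc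
        cong: if_cong)
qed

lemma psd_imp_hermitian:
  assumes "psd N A"
  shows "hermitian N A"
  unfolding hermitian_def
proof (intro allI impI)
  fix y z assume y: "y < N" and z: "z < N"
  have form_real: "Im (\<Sum>i<N. \<Sum>j<N. cnj (v i) * A i j * v j) = 0" for v
    using assms unfolding psd_def Let_def by blast
  have diag_real: "Im (A k k) = 0" if "k < N" for k
    using form_real[of "\<lambda>i. if i = k then 1 else 0", unfolded quadratic_form_one_point[OF that]]
    by simp
  show "A z y = cnj (A y z)"
  proof (cases "y = z")
    case True
    then show ?thesis using diag_real y by (simp add: complex_eq_iff)
  next
    case False
    \<comment> \<open>polarisation: the form is real at e_y + e_z and at e_y + i e_z\<close>
    have form_two:
      "Im (cnj a * A y y * a + cnj a * A y z * b + cnj b * A z y * a + cnj b * A z z * b) = 0"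
      for a b
      using form_real[of "\<lambda>i. (if i = y then a else 0) + (if i = z then b else 0)"]
      unfolding quadratic_form_two_point[OF False y z] .
    have "Im (A y z + A z y) = 0"
      using form_two[of 1 1] diag_real y z by simp
    moreover have "Re (A y z - A z y) = 0"
      using form_two[of 1 \<i>] diag_real y z by simp
    ultimately show ?thesis by (simp add: complex_eq_iff)
  qed
qed

lemma sum_lessThan_square_diag_pairs:
  fixes f :: "nat \<Rightarrow> nat \<Rightarrow> 'a::comm_monoid_add"
  shows "(\<Sum>i<N. \<Sum>j<N. f i j) = (\<Sum>i<N. f i i) + (\<Sum>z<N. \<Sum>y<z. f y z + f z y)"
proof (induction N)
  case 0
  then show ?case by simp
next
  case (Suc N)
  have "(\<Sum>i<Suc N. \<Sum>j<Suc N. f i j)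
      = (\<Sum>i<N. \<Sum>j<N. f i j) + f N N + (\<Sum>y<N. f y N + f N y)"
    by (simp add: sum.distrib add_ac)
  then show ?case by (simp add: Suc.IH add_ac)
qed

lemma mtrace_prod_W_op:
  "mtrace_prod (2^n) (W_op n) A = - (\<Sum>z<2^n. \<Sum>y<z. A y z + A z y) / 2^n"
proof -
  let ?N = "2^n :: nat"
  have "W_op n i k * A k i = (if i = k then A i i / 2^n else 0) - A k i / 2^n" for i k
    by (simp add: W_op_def Phi0_def left_diff_distrib flip: of_real_mult)
  then have "mtrace_prod ?N (W_op n) A = ((\<Sum>i<?N. A i i) - (\<Sum>i<?N. \<Sum>k<?N. A k i)) / 2^n"
    by (simp add: mtrace_prod_def sum_subtractf diff_divide_distrib sum_divide_distrib)
  also have "(\<Sum>i<?N. \<Sum>k<?N. A k i) = (\<Sum>i<?N. A i i) + (\<Sum>z<?N. \<Sum>y<z. A y z + A z y)"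
    by (simp add: sum_lessThan_square_diag_pairs add.commute)
  finally show ?thesis by simp
qed

lemma norm_pair_sum_le_hermitian:
  assumes "hermitian N A"
  shows "cmod (\<Sum>z<N. \<Sum>y<z. A y z + A z y) \<le> 2 * (\<Sum>z<N. \<Sum>y<z. cmod (A y z))"
proof -
  have "cmod (\<Sum>z<N. \<Sum>y<z. A y z + A z y) \<le> (\<Sum>z<N. \<Sum>y<z. cmod (A y z + A z y))"
    by (rule order_trans[OF norm_sum sum_mono[OF norm_sum]])
  also have "\<dots> \<le> (\<Sum>z<N. \<Sum>y<z. 2 * cmod (A y z))"
  proof (intro sum_mono)
    fix z y assume "z \<in> {..<N}" "y \<in> {..<z}"
    then have "y < N" "z < N" by auto
    then have "A z y = cnj (A y z)" using assms unfolding hermitian_def by blast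
    then show "cmod (A y z + A z y) \<le> 2 * cmod (A y z)"
      using norm_triangle_ineq[of "A y z" "A z y"] by simp
  qed
  finally show ?thesis by (simp add: sum_distrib_left)
qed

theorem lemma4:
  fixes n :: nat and P :: "nat \<Rightarrow> nat \<Rightarrow> nat \<Rightarrow> complex"
  assumes "is_POVM n P"
  shows "C_linf n P \<ge> (2 ^ n / 2) * Q_theta0 n P"
proof -
  let ?N = "2^n :: nat"
  have herm: "hermitian ?N (P x)" if "x < ?N" for x
    using assms that psd_imp_hermitian unfolding is_POVM_def by blast
  have "Q_theta0 n P = (\<Sum>x<?N. cmod (mtrace_prod ?N (W_op n) (P x)))"
    by (simp add: Q_theta0_def sum_distrib_left)
  also have "\<dots> = (\<Sum>x<?N. cmod (\<Sum>z<?N. \<Sum>y<z. P x y z + P x z y) / 2^n)"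
    by (simp only: mtrace_prod_W_op norm_divide norm_minus_cancel norm_power norm_numeral)
  finally have "(2 ^ n / 2) * Q_theta0 n P = (\<Sum>x<?N. cmod (\<Sum>z<?N. \<Sum>y<z. P x y z + P x z y) / 2)"
    by (simp add: sum_distrib_left)
  also have "\<dots> \<le> C_linf n P"
    unfolding C_linf_def by (rule sum_mono) (use norm_pair_sum_le_hermitian herm in fastforce)
  finally show ?thesis .
qed

end
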